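(* Let $r,n\ge1$, $a,b$ integers with $\gcd(a,b)=1$, and let $\lambda$ be an $(a,b;n)$-balanced partition of $rn$. Then $$\#\{(i,j)\in\lambda: d_{i,j}\text{ is invariant}\}+\#\{(i,j)\in\lambda: u_{i,j}\text{ is invariant}\}=2r.$$
   Context: Partitions are Young diagrams $\lambda\subset\mathbb{Z}_{\ge0}^2$ (finite sets with $(i,j)\in\lambda\Rightarrow(i',j')\in\lambda$ for $i'\le i$, $j'\le j$). $l(j)=\#\{i:(i,j)\in\lambda\}$, $c(i)=\#\{j:(i,j)\in\lambda\}$. Box $(i,j)$ has color $ai+bj\bmod n$; $\lambda$ is $(a,b;n)$-balanced if each residue mod $n$ is the color of exactly $r$ boxes. An arrow from $(l,s)$ to $(i',j')$ is invariant if $a(l-i')+b(s-j')\equiv0\pmod n$. For $(i,j)\in\lambda$, $d_{i,j}$ is the arrow from $(l(j),j)$ to $(i,c(i)-1)$ and $u_{i,j}$ the arrow from $(i,c(i))$ to $(l(j)-1,j)$. *)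

theory Defs
  imports Main
begin

definition young_diagram :: "(nat \<times> nat) set \<Rightarrow> bool" where
  "young_diagram lam \<longleftrightarrow> finite lam \<and>
     (\<forall>i j i' j'. (i, j) \<in> lam \<and> i' \<le> i \<and> j' \<le> j \<longrightarrow> (i', j') \<in> lam)"

definition lcol :: "(nat \<times> nat) set \<Rightarrow> nat \<Rightarrow> nat" where
  "lcol lam j = card {i. (i, j) \<in> lam}"

definition crow :: "(nat \<times> nat) set \<Rightarrow> nat \<Rightarrow> nat" where
  "crow lam i = card {j. (i, j) \<in> lam}"

definition color :: "int \<Rightarrow> int \<Rightarrow> int \<Rightarrow> nat \<times> nat \<Rightarrow> int" where
  "color a b n p = (a * int (fst p) + b * int (snd p)) mod n"

definition balanced :: "int \<Rightarrow> int \<Rightarrow> nat \<Rightarrow> nat \<Rightarrow> (nat \<times> nat) set \<Rightarrow> bool" where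
  "balanced a b n r lam \<longleftrightarrow>
     (\<forall>k::int. 0 \<le> k \<and> k < int n \<longrightarrow> card {p \<in> lam. color a b (int n) p = k} = r)"

definition invariant_arrow :: "int \<Rightarrow> int \<Rightarrow> nat \<Rightarrow> int \<times> int \<Rightarrow> int \<times> int \<Rightarrow> bool" where
  "invariant_arrow a b n src tgt \<longleftrightarrow>
     (a * (fst src - fst tgt) + b * (snd src - snd tgt)) mod int n = 0"

definition d_arrow :: "(nat \<times> nat) set \<Rightarrow> nat \<Rightarrow> nat \<Rightarrow> (int \<times> int) \<times> (int \<times> int)" where
  "d_arrow lam i j = ((int (lcol lam j), int j), (int i, int (crow lam i) - 1))"

definition u_arrow :: "(nat \<times> nat) set \<Rightarrow> nat \<Rightarrow> nat \<Rightarrow> (int \<times> int) \<times> (int \<times> int)" where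
  "u_arrow lam i j = ((int i, int (crow lam i)), (int (lcol lam j) - 1, int j))"

end

theory Submission
  imports Defs "HOL-Library.Real_Mod"
begin

text \<open>Counting by the n-th roots of unity, n times the number of invariant arrows is the sum over all
  characters E of \<int>/n of \<Sum> E (w d(i,j)) + \<Sum> E (w u(i,j)), where w is the weight a \<Delta>i + b \<Delta>j of an arrow.
  For every character E of \<int> one has the identity
    \<Sum> E (w d(i,j)) + \<Sum> E (w u(i,j)) = Q' + E (a + b) Q - (1 - E a) (1 - E b) Q Q',
  where Q = \<Sum> E (a i + b j) and Q' = \<Sum> E (- a i - b j) run over the cells of \<lambda>. It comes from expanding
  E (a (l(j) - i)) as a geometric series down column j and regrouping the result over pairs of rows.
  If \<lambda> is balanced, Q and Q' vanish for every nontrivial character of \<int>/n, so only the trivial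
  character contributes, and it contributes 2 |\<lambda>| = 2 r n.\<close>

section \<open>Young diagrams\<close>

lemma down_closed_eq_lessThan_card:
  fixes S :: "nat set"
  assumes "finite S" and "\<And>x y. x \<in> S \<Longrightarrow> y \<le> x \<Longrightarrow> y \<in> S"
  shows "S = {..<card S}"
proof (cases "S = {}")
  case False
  have "S = {..Max S}"
    using Max_ge[OF assms(1)] Max_in[OF assms(1) False] assms(2) by auto
  then show ?thesis
    by (metis card_atMost lessThan_Suc_atMost)
qed simp

lemma young_diagram_finite: "young_diagram lam \<Longrightarrow> finite lam"
  unfolding young_diagram_def by blast

lemma young_diagram_down_closed:
  "young_diagram lam \<Longrightarrow> (i, j) \<in> lam \<Longrightarrow> i' \<le> i \<Longrightarrow> j' \<le> j \<Longrightarrow> (i', j') \<in> lam"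
  unfolding young_diagram_def by blast

lemma young_diagram_mem_iff_crow:
  assumes "young_diagram lam"
  shows "(i, j) \<in> lam \<longleftrightarrow> j < crow lam i"
proof -
  have "{j. (i, j) \<in> lam} \<subseteq> snd ` lam" by force
  then have "finite {j. (i, j) \<in> lam}"
    using young_diagram_finite[OF assms] finite_subset by blast
  then have "{j. (i, j) \<in> lam} = {..<crow lam i}"
    unfolding crow_def
    by (rule down_closed_eq_lessThan_card) (use young_diagram_down_closed[OF assms] in blast)
  then show ?thesis by blast
qed

lemma young_diagram_mem_iff_lcol:
  assumes "young_diagram lam"
  shows "(i, j) \<in> lam \<longleftrightarrow> i < lcol lam j"
proof -
  have "{i. (i, j) \<in> lam} \<subseteq> fst ` lam" by force
  then have "finite {i. (i, j) \<in> lam}"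
    using young_diagram_finite[OF assms] finite_subset by blast
  then have "{i. (i, j) \<in> lam} = {..<lcol lam j}"
    unfolding lcol_def
    by (rule down_closed_eq_lessThan_card) (use young_diagram_down_closed[OF assms] in blast)
  then show ?thesis by blast
qed

lemma young_diagram_eq_Sigma_rows:
  assumes "young_diagram lam"
  shows "lam = (SIGMA i:{..<lcol lam 0}. {..<crow lam i})"
  using young_diagram_mem_iff_crow[OF assms] young_diagram_mem_iff_lcol[OF assms]
    young_diagram_down_closed[OF assms]
  by fastforce

lemma young_diagram_sum_rows:
  assumes "young_diagram lam"
  shows "sum f lam = (\<Sum>i<lcol lam 0. \<Sum>j<crow lam i. f (i, j))"
  by (subst young_diagram_eq_Sigma_rows[OF assms]) (simp add: sum.Sigma)

lemma young_diagram_sum_column_swap: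
  assumes "young_diagram lam"
  shows "(\<Sum>(i, j)\<in>lam. \<Sum>k\<in>{i..<lcol lam j}. g i j k) = (\<Sum>(k, j)\<in>lam. \<Sum>i\<le>k. g i j k)"
proof -
  have fin: "finite lam" by (rule young_diagram_finite[OF assms])
  have "(\<Sum>(i, j)\<in>lam. \<Sum>k\<in>{i..<lcol lam j}. g i j k)
      = (\<Sum>(p, k)\<in>(SIGMA p:lam. {fst p..<lcol lam (snd p)}). g (fst p) (snd p) k)"
    using fin by (simp add: sum.Sigma split_def)
  also have "\<dots> = (\<Sum>(q, i)\<in>(SIGMA q:lam. {..fst q}). g i (snd q) (fst q))"
    by (rule sum.reindex_bij_witness[where i = "\<lambda>(q, i). ((i, snd q), fst q)"
          and j = "\<lambda>(p, k). ((k, snd p), fst p)"])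
      (auto simp: young_diagram_mem_iff_lcol[OF assms, symmetric]
        intro: young_diagram_down_closed[OF assms])
  also have "\<dots> = (\<Sum>(k, j)\<in>lam. \<Sum>i\<le>k. g i j k)"
    using fin by (simp add: sum.Sigma split_def)
  finally show ?thesis .
qed

lemma young_diagram_sum_row_reverse:
  assumes "young_diagram lam"
  shows "(\<Sum>(i, j)\<in>lam. f i (crow lam i - Suc j)) = (\<Sum>(i, j)\<in>lam. f i j)"
  unfolding young_diagram_sum_rows[OF assms] by (simp add: sum.nat_diff_reindex)

lemma sum_square_split_triangles:
  fixes h :: "nat \<Rightarrow> nat \<Rightarrow> 'a::comm_monoid_add"
  shows "(\<Sum>k<n. \<Sum>i<n. h k i) + (\<Sum>k<n. h k k) = (\<Sum>k<n. \<Sum>i\<le>k. h k i) + (\<Sum>k<n. \<Sum>i\<le>k. h i k)"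
proof -
  have "(\<Sum>k<n. \<Sum>i<n. h k i) = (\<Sum>k<n. \<Sum>i\<le>k. h k i) + (\<Sum>k<n. \<Sum>i\<in>{i. i < n \<and> k < i}. h k i)"
    unfolding sum.distrib[symmetric]
  proof (rule sum.cong[OF refl])
    fix k assume "k \<in> {..<n}"
    then have "{..<n} = {..k} \<union> {i. i < n \<and> k < i}" by auto
    then have "(\<Sum>i<n. h k i) = sum (h k) ({..k} \<union> {i. i < n \<and> k < i})"
      by (rule arg_cong)
    also have "\<dots> = (\<Sum>i\<le>k. h k i) + (\<Sum>i\<in>{i. i < n \<and> k < i}. h k i)"
      by (rule sum.union_disjoint) auto
    finally show "(\<Sum>i<n. h k i) = (\<Sum>i\<le>k. h k i) + (\<Sum>i\<in>{i. i < n \<and> k < i}. h k i)" .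
  qed
  also have "(\<Sum>k<n. \<Sum>i\<in>{i. i < n \<and> k < i}. h k i) = (\<Sum>i<n. \<Sum>k\<in>{k. k < n \<and> k < i}. h k i)"
    using sum.swap_restrict[of "{..<n}" "{..<n}" h "\<lambda>k i. k < i"] by simp
  also have "\<dots> = (\<Sum>i<n. \<Sum>k<i. h k i)"
    by (rule sum.cong[OF refl], rule sum.cong) auto
  finally show ?thesis
    by (simp add: sum.distrib lessThan_Suc_atMost[symmetric] add.assoc)
qed

section \<open>An identity for characters of the integers\<close>

definition arrow_weight :: "int \<Rightarrow> int \<Rightarrow> (int \<times> int) \<times> (int \<times> int) \<Rightarrow> int" where
  "arrow_weight a b arr = a * (fst (fst arr) - fst (snd arr)) + b * (snd (fst arr) - snd (snd arr))"

lemma invariant_arrow_iff_dvd: "case_prod (invariant_arrow a b n) arr \<longleftrightarrow> int n dvd arrow_weight a b arr"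
  by (cases arr) (simp add: invariant_arrow_def arrow_weight_def dvd_eq_mod_eq_0)

lemma arrow_weight_d_arrow:
  "arrow_weight a b (d_arrow lam i j) = a * (int (lcol lam j) - int i) + b * (int j + 1 - int (crow lam i))"
  by (simp add: arrow_weight_def d_arrow_def algebra_simps)

lemma arrow_weight_u_arrow: "arrow_weight a b (u_arrow lam i j) = a + b - arrow_weight a b (d_arrow lam i j)"
  by (simp add: arrow_weight_def d_arrow_def u_arrow_def algebra_simps)

locale int_character =
  fixes E :: "int \<Rightarrow> 'a::comm_ring_1"
  assumes add: "E (u + v) = E u * E v"
    and zero: "E 0 = 1"
begin

lemma mult_eq: "u + v = w \<Longrightarrow> E u * E v = E w"
  using add[of u v] by simp

lemma uminus_mult_self: "E (- u) * E u = 1"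
  using mult_eq[of "- u" u 0] zero by simp

lemma diff: "E (u - v) = E u * E (- v)"
  using add[of u "- v"] by simp

lemma uminus_character: "int_character (\<lambda>u. E (- u))"
  by unfold_locales (simp_all add: zero flip: add)

lemma geometric_sum:
  assumes "m \<le> n"
  shows "(E a - 1) * (\<Sum>k\<in>{m..<n}. E (a * int k)) = E (a * int n) - E (a * int m)"
  using assms
proof (induction n rule: dec_induct)
  case (step n)
  have "E a * E (a * int n) = E (a * int (Suc n))"
    by (rule mult_eq) (simp add: algebra_simps)
  with step.IH step.hyps show ?case
    by (simp add: algebra_simps)
qed simp

end

definition row_sum :: "(int \<Rightarrow> 'a::comm_ring_1) \<Rightarrow> int \<Rightarrow> (nat \<times> nat) set \<Rightarrow> nat \<Rightarrow> 'a" where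
  "row_sum E b lam i = (\<Sum>j<crow lam i. E (b * int j))"

text \<open>With w (i, j) = a i + b j, this is the sum of E (w p - w q) over all pairs of cells p, q such
  that the row of q is at most the row of p.\<close>
definition row_pair_sum :: "(int \<Rightarrow> 'a::comm_ring_1) \<Rightarrow> int \<Rightarrow> int \<Rightarrow> (nat \<times> nat) set \<Rightarrow> 'a" where
  "row_pair_sum E a b lam =
     (\<Sum>k<lcol lam 0. \<Sum>i\<le>k. E (a * (int k - int i)) * row_sum E b lam k * row_sum E (- b) lam i)"

context int_character
begin

lemma geometric_sum_atMost_rev:
  "(E a - 1) * (\<Sum>i\<le>k. E (a * (int k - int i))) = E (a * (int k + 1)) - 1"
proof -
  have "(\<Sum>i\<le>k. E (a * (int k - int i))) = (\<Sum>i<Suc k. E (a * int (Suc k - Suc i)))"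
    by (intro sum.cong) (auto simp: lessThan_Suc_atMost)
  also have "\<dots> = (\<Sum>i\<in>{0..<Suc k}. E (a * int i))"
    unfolding atLeast0LessThan by (rule sum.nat_diff_reindex)
  finally show ?thesis
    using geometric_sum[of 0 "Suc k" a] by (simp add: zero add.commute)
qed

lemma geometric_sum_uminus:
  "(1 - E b) * (\<Sum>j<c. E (- (b * int j))) = E (b * (1 - int c)) - E b"
proof -
  have "(1 - E b) * (\<Sum>j<c. E (- (b * int j))) = E b * ((E (- b) - 1) * (\<Sum>j<c. E (- (b * int j))))"
    using uminus_mult_self[of b] by (simp add: right_diff_distrib mult.assoc[symmetric] mult.commute)
  also have "\<dots> = E b * (E (- (b * int c)) - 1)"
    using geometric_sum[of 0 c "- b"] by (simp add: zero atLeast0LessThan)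
  also have "\<dots> = E b * E (- (b * int c)) - E b"
    by (simp add: right_diff_distrib)
  also have "E b * E (- (b * int c)) = E (b * (1 - int c))"
    by (rule mult_eq) (simp add: algebra_simps)
  finally show ?thesis .
qed

lemma sum_d_arrow_telescope:
  assumes young: "young_diagram lam"
  shows "(\<Sum>(i, j)\<in>lam. E (a * (int (lcol lam j) - int i) + b * (int j + 1 - int (crow lam i))))
       = (\<Sum>(i, j)\<in>lam. E (- (b * int j)))
         + (E a - 1) * (\<Sum>(k, j)\<in>lam. \<Sum>i\<le>k. E (a * (int k - int i) + b * (int j + 1 - int (crow lam i))))"
proof -
  have cell: "E (a * (int (lcol lam j) - int i) + b * (int j + 1 - int (crow lam i)))
      = E (b * (int j + 1 - int (crow lam i)))
        + (E a - 1) * (\<Sum>k\<in>{i..<lcol lam j}. E (a * (int k - int i) + b * (int j + 1 - int (crow lam i))))"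
    if "(i, j) \<in> lam" for i j
  proof -
    define F where "F = E (- (a * int i) + b * (int j + 1 - int (crow lam i)))"
    have shift: "E (a * int k) * F = E (a * (int k - int i) + b * (int j + 1 - int (crow lam i)))" for k
      unfolding F_def by (rule mult_eq) (simp add: algebra_simps)
    have "i \<le> lcol lam j"
      using that young_diagram_mem_iff_lcol[OF young] by simp
    then have "(E a - 1) * (\<Sum>k\<in>{i..<lcol lam j}. E (a * int k)) * F
        = E (a * int (lcol lam j)) * F - E (a * int i) * F"
      by (subst geometric_sum) (simp_all add: left_diff_distrib)
    then show ?thesis
      by (simp add: shift mult.assoc sum_distrib_right)
  qed
  have "(\<Sum>(i, j)\<in>lam. E (a * (int (lcol lam j) - int i) + b * (int j + 1 - int (crow lam i))))
      = (\<Sum>(i, j)\<in>lam. E (b * (int j + 1 - int (crow lam i))))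
        + (E a - 1) * (\<Sum>(i, j)\<in>lam. \<Sum>k\<in>{i..<lcol lam j}.
            E (a * (int k - int i) + b * (int j + 1 - int (crow lam i))))"
    by (simp add: cell sum.distrib sum_distrib_left case_prod_unfold)
  also have "(\<Sum>(i, j)\<in>lam. E (b * (int j + 1 - int (crow lam i))))
      = (\<Sum>(i, j)\<in>lam. E (- (b * int (crow lam i - Suc j))))"
    by (intro sum.cong) (auto simp: young_diagram_mem_iff_crow[OF young] algebra_simps)
  also have "\<dots> = (\<Sum>(i, j)\<in>lam. E (- (b * int j)))"
    by (rule young_diagram_sum_row_reverse[OF young])
  also have "(\<Sum>(i, j)\<in>lam. \<Sum>k\<in>{i..<lcol lam j}. E (a * (int k - int i) + b * (int j + 1 - int (crow lam i))))
      = (\<Sum>(k, j)\<in>lam. \<Sum>i\<le>k. E (a * (int k - int i) + b * (int j + 1 - int (crow lam i))))"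
    by (rule young_diagram_sum_column_swap[OF young])
  finally show ?thesis .
qed

lemma sum_column_pairs:
  assumes young: "young_diagram lam"
  shows "(E a - 1) * (\<Sum>(k, j)\<in>lam. \<Sum>i\<le>k. E (a * (int k - int i) + b * (int j + 1 - int (crow lam i))))
       = E (a + b) * (\<Sum>(i, j)\<in>lam. E (a * int i + b * int j)) - (\<Sum>(i, j)\<in>lam. E (b * (int j + 1)))
         - (1 - E a) * (1 - E b) * row_pair_sum E a b lam"
proof -
  define T where "T = (\<Sum>(k, j)\<in>lam. \<Sum>i\<le>k. E (a * (int k - int i) + b * (int j + 1 - int (crow lam i))))"
  let ?L = "lcol lam 0" and ?R = "row_sum E b lam" and ?R' = "row_sum E (- b) lam"
  define S where "S k = (\<Sum>i\<le>k. E (a * (int k - int i)))" for k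
  have upper_row: "E (b * (1 - int (crow lam i))) = E b + (1 - E b) * ?R' i" for i
    using geometric_sum_uminus[of b "crow lam i"] by (simp add: row_sum_def)
  have "T = (\<Sum>k<?L. \<Sum>i\<le>k. E (a * (int k - int i)) * ?R k * E (b * (1 - int (crow lam i))))"
    unfolding T_def young_diagram_sum_rows[OF young] row_sum_def
    by (rule sum.cong[OF refl], simp only: prod.case, subst sum.swap)
      (simp add: sum_distrib_left sum_distrib_right algebra_simps flip: add)
  also have "\<dots> = (\<Sum>k<?L. E b * ?R k * S k) + (1 - E b) * row_pair_sum E a b lam"
    unfolding upper_row row_pair_sum_def S_def
    by (simp add: sum.distrib sum_subtractf sum_distrib_left algebra_simps)
  finally have T_eq: "T = (\<Sum>k<?L. E b * ?R k * S k) + (1 - E b) * row_pair_sum E a b lam" .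
  have "(E a - 1) * T
      = (\<Sum>k<?L. E b * ?R k * ((E a - 1) * S k)) - (1 - E a) * (1 - E b) * row_pair_sum E a b lam"
    unfolding T_eq by (simp add: sum_distrib_left algebra_simps)
  also have "\<dots> = (\<Sum>k<?L. E b * ?R k * (E (a * (int k + 1)) - 1)) - (1 - E a) * (1 - E b) * row_pair_sum E a b lam"
    by (simp only: S_def geometric_sum_atMost_rev)
  also have "(\<Sum>k<?L. E b * ?R k * (E (a * (int k + 1)) - 1))
      = E (a + b) * (\<Sum>(i, j)\<in>lam. E (a * int i + b * int j)) - (\<Sum>(i, j)\<in>lam. E (b * (int j + 1)))"
    unfolding young_diagram_sum_rows[OF young] row_sum_def
    by (simp add: sum_distrib_left sum_distrib_right sum_subtractf algebra_simps flip: add)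
  finally show ?thesis
    unfolding T_def .
qed

lemma sum_d_arrow_weight:
  assumes young: "young_diagram lam"
  shows "(\<Sum>(i, j)\<in>lam. E (arrow_weight a b (d_arrow lam i j)))
       = (\<Sum>(i, j)\<in>lam. E (- (b * int j))) - (\<Sum>(i, j)\<in>lam. E (b * (int j + 1)))
         + E (a + b) * (\<Sum>(i, j)\<in>lam. E (a * int i + b * int j))
         - (1 - E a) * (1 - E b) * row_pair_sum E a b lam"
  unfolding arrow_weight_d_arrow sum_d_arrow_telescope[OF young] sum_column_pairs[OF young] by simp

lemma cell_sum_mult_conj:
  assumes young: "young_diagram lam"
  shows "(\<Sum>(i, j)\<in>lam. E (a * int i + b * int j)) * (\<Sum>(i, j)\<in>lam. E (- (a * int i + b * int j)))
         + (\<Sum>k<lcol lam 0. row_sum E b lam k * row_sum E (- b) lam k)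
       = row_pair_sum E a b lam + row_pair_sum (\<lambda>u. E (- u)) a b lam"
proof -
  let ?L = "lcol lam 0" and ?R = "row_sum E b lam" and ?R' = "row_sum E (- b) lam"
  define h where "h k i = E (a * int k) * ?R k * (E (- (a * int i)) * ?R' i)" for k i
  have "(\<Sum>(i, j)\<in>lam. E (a * int i + b * int j)) = (\<Sum>k<?L. E (a * int k) * ?R k)"
    and "(\<Sum>(i, j)\<in>lam. E (- (a * int i + b * int j))) = (\<Sum>i<?L. E (- (a * int i)) * ?R' i)"
    by (simp_all add: young_diagram_sum_rows[OF young] row_sum_def sum_distrib_left add diff)
  then have "(\<Sum>(i, j)\<in>lam. E (a * int i + b * int j)) * (\<Sum>(i, j)\<in>lam. E (- (a * int i + b * int j)))
      = (\<Sum>k<?L. \<Sum>i<?L. h k i)"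
    by (simp add: h_def sum_product)
  moreover have "h k k = ?R k * ?R' k" for k
  proof -
    have "h k k = (E (- (a * int k)) * E (a * int k)) * (?R k * ?R' k)"
      by (simp add: h_def mult_ac)
    then show ?thesis
      by (simp only: uminus_mult_self mult_1_left)
  qed
  moreover have "(\<Sum>k<?L. \<Sum>i\<le>k. h k i) = row_pair_sum E a b lam"
    unfolding row_pair_sum_def h_def
    by (intro sum.cong refl) (simp add: mult_ac right_diff_distrib diff)
  moreover have "(\<Sum>k<?L. \<Sum>i\<le>k. h i k) = row_pair_sum (\<lambda>u. E (- u)) a b lam"
    unfolding row_pair_sum_def h_def row_sum_def
    by (intro sum.cong refl) (simp add: mult_ac right_diff_distrib diff)
  ultimately show ?thesis
    using sum_square_split_triangles[of h ?L] by simp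
qed

lemma row_sum_diagonal:
  assumes young: "young_diagram lam"
  shows "(1 - E b) * (\<Sum>k<lcol lam 0. row_sum E b lam k * row_sum E (- b) lam k)
       = (\<Sum>(i, j)\<in>lam. E (- (b * int j))) - (\<Sum>(i, j)\<in>lam. E (b * (int j + 1)))"
proof -
  have row: "(1 - E b) * row_sum E b lam k = 1 - E (b * int (crow lam k))" for k
    using geometric_sum[of 0 "crow lam k" b] by (simp add: row_sum_def atLeast0LessThan zero algebra_simps)
  have "(1 - E b) * (\<Sum>k<lcol lam 0. row_sum E b lam k * row_sum E (- b) lam k)
      = (\<Sum>k<lcol lam 0. (1 - E (b * int (crow lam k))) * row_sum E (- b) lam k)"
    by (simp add: sum_distrib_left mult.assoc[symmetric] row)
  also have "\<dots> = (\<Sum>(i, j)\<in>lam. E (- (b * int j))) - (\<Sum>(i, j)\<in>lam. E (b * (int (crow lam i) - int j)))"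
    by (simp add: young_diagram_sum_rows[OF young] row_sum_def left_diff_distrib sum_subtractf
        sum_distrib_left right_diff_distrib diff)
  also have "(\<Sum>(i, j)\<in>lam. E (b * (int (crow lam i) - int j)))
      = (\<Sum>(i, j)\<in>lam. E (b * (int (crow lam i - Suc j) + 1)))"
    by (intro sum.cong) (auto simp: young_diagram_mem_iff_crow[OF young])
  also have "\<dots> = (\<Sum>(i, j)\<in>lam. E (b * (int j + 1)))"
    by (rule young_diagram_sum_row_reverse[OF young])
  finally show ?thesis .
qed

lemma sum_u_arrow_weight:
  assumes young: "young_diagram lam"
  shows "(\<Sum>(i, j)\<in>lam. E (arrow_weight a b (u_arrow lam i j)))
       = E a * (\<Sum>(i, j)\<in>lam. E (b * (int j + 1))) - E a * (\<Sum>(i, j)\<in>lam. E (- (b * int j)))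
         + (\<Sum>(i, j)\<in>lam. E (- (a * int i + b * int j)))
         - (1 - E a) * (1 - E b) * row_pair_sum (\<lambda>u. E (- u)) a b lam"
proof -
  interpret conj: int_character "\<lambda>u. E (- u)"
    by (rule uminus_character)
  define A where "A = (\<Sum>(i, j)\<in>lam. E (b * int j))"
  define B where "B = (\<Sum>(i, j)\<in>lam. E (- (b * (int j + 1))))"
  define Q' where "Q' = (\<Sum>(i, j)\<in>lam. E (- (a * int i + b * int j)))"
  define c where "c = (1 - E (- a)) * (1 - E (- b))"
  \<comment> \<open>The weight of u is a + b minus that of d, so this is the d-sum for the conjugate character.\<close>
  have "(\<Sum>(i, j)\<in>lam. E (arrow_weight a b (u_arrow lam i j)))
      = E (a + b) * (\<Sum>(i, j)\<in>lam. E (- arrow_weight a b (d_arrow lam i j)))"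
    by (simp add: arrow_weight_u_arrow sum_distrib_left case_prod_unfold diff)
  also have "(\<Sum>(i, j)\<in>lam. E (- arrow_weight a b (d_arrow lam i j)))
      = A - B + E (- (a + b)) * Q' - c * row_pair_sum (\<lambda>u. E (- u)) a b lam"
    using conj.sum_d_arrow_weight[OF young, of a b]
    unfolding A_def B_def Q'_def c_def by (simp only: minus_minus)
  finally have u_sum: "(\<Sum>(i, j)\<in>lam. E (arrow_weight a b (u_arrow lam i j)))
      = E (a + b) * (A - B + E (- (a + b)) * Q' - c * row_pair_sum (\<lambda>u. E (- u)) a b lam)" .
  have "E (a + b) * A = E a * (\<Sum>(i, j)\<in>lam. E (b * (int j + 1)))"
    unfolding A_def sum_distrib_left by (simp add: case_prod_unfold add algebra_simps)
  moreover have "E (a + b) * B = E a * (\<Sum>(i, j)\<in>lam. E (- (b * int j)))"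
  proof -
    have "E (a + b) * E (- (b * (int j + 1))) = E (a - b * int j)" for j
      by (rule mult_eq) (simp add: algebra_simps)
    then show ?thesis
      unfolding B_def sum_distrib_left by (simp add: case_prod_unfold diff)
  qed
  moreover have "E (a + b) * E (- (a + b)) = 1"
    using uminus_mult_self[of "a + b"] by (simp add: mult.commute)
  moreover have "E (a + b) * c = (1 - E a) * (1 - E b)"
  proof -
    have "E (a + b) * c = (E a * (1 - E (- a))) * (E b * (1 - E (- b)))"
      by (simp add: c_def add mult_ac)
    then show ?thesis
      using uminus_mult_self[of a] uminus_mult_self[of b]
      by (simp add: right_diff_distrib mult.commute)
  qed
  ultimately show ?thesis
    unfolding u_sum Q'_def[symmetric] by (simp add: right_diff_distrib distrib_left mult.assoc[symmetric])
qed

theorem sum_arrow_weights: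
  assumes young: "young_diagram lam"
  shows "(\<Sum>(i, j)\<in>lam. E (arrow_weight a b (d_arrow lam i j)))
       + (\<Sum>(i, j)\<in>lam. E (arrow_weight a b (u_arrow lam i j)))
     = (\<Sum>(i, j)\<in>lam. E (- (a * int i + b * int j)))
       + E (a + b) * (\<Sum>(i, j)\<in>lam. E (a * int i + b * int j))
       - (1 - E a) * (1 - E b) * (\<Sum>(i, j)\<in>lam. E (a * int i + b * int j))
           * (\<Sum>(i, j)\<in>lam. E (- (a * int i + b * int j)))"
proof -
  define A where "A = (\<Sum>(i, j)\<in>lam. E (- (b * int j)))"
  define B where "B = (\<Sum>(i, j)\<in>lam. E (b * (int j + 1)))"
  define Q where "Q = (\<Sum>(i, j)\<in>lam. E (a * int i + b * int j))"
  define Q' where "Q' = (\<Sum>(i, j)\<in>lam. E (- (a * int i + b * int j)))"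
  define c where "c = (1 - E a) * (1 - E b)"
  define \<Delta> where "\<Delta> = (\<Sum>k<lcol lam 0. row_sum E b lam k * row_sum E (- b) lam k)"
  have pairs: "row_pair_sum E a b lam + row_pair_sum (\<lambda>u. E (- u)) a b lam = Q * Q' + \<Delta>"
    unfolding Q_def Q'_def \<Delta>_def by (rule cell_sum_mult_conj[OF young, symmetric])
  have diagonal: "(1 - E a) * (A - B) = c * \<Delta>"
    unfolding A_def B_def c_def \<Delta>_def row_sum_diagonal[OF young, symmetric] by (simp add: mult.assoc)
  have "(\<Sum>(i, j)\<in>lam. E (arrow_weight a b (d_arrow lam i j)))
        + (\<Sum>(i, j)\<in>lam. E (arrow_weight a b (u_arrow lam i j)))
      = (1 - E a) * (A - B) + E (a + b) * Q + Q'
        - c * (row_pair_sum E a b lam + row_pair_sum (\<lambda>u. E (- u)) a b lam)"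
    unfolding sum_d_arrow_weight[OF young] sum_u_arrow_weight[OF young] A_def B_def Q_def Q'_def c_def
    by (simp add: algebra_simps)
  also have "\<dots> = Q' + E (a + b) * Q - c * Q * Q'"
    unfolding pairs diagonal by (simp add: algebra_simps)
  finally show ?thesis
    unfolding Q_def Q'_def c_def by (simp add: mult.assoc)
qed

end

section \<open>Counting with roots of unity\<close>

definition unit_root_char :: "nat \<Rightarrow> int \<Rightarrow> int \<Rightarrow> complex" where
  "unit_root_char n m u = cis (2 * pi * of_int (m * u) / of_nat n)"

lemma int_character_unit_root_char: "int_character (unit_root_char n m)"
  by unfold_locales (simp_all add: unit_root_char_def cis_mult distrib_left add_divide_distrib)

lemma unit_root_char_commute: "unit_root_char n m u = unit_root_char n u m"
  by (simp add: unit_root_char_def mult.commute)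

lemma unit_root_char_zero: "unit_root_char n 0 u = 1"
  by (simp add: unit_root_char_def)

lemma unit_root_char_uminus: "unit_root_char n m (- u) = unit_root_char n (- m) u"
  by (simp add: unit_root_char_def)

lemma unit_root_char_mod:
  assumes "n > 0"
  shows "unit_root_char n m (u mod int n) = unit_root_char n m u"
proof -
  interpret int_character "unit_root_char n m"
    by (rule int_character_unit_root_char)
  have "unit_root_char n m (int n * (u div int n)) = cis (2 * pi * of_int (m * (u div int n)))"
    unfolding unit_root_char_def using assms by (intro arg_cong[where f = cis]) simp
  also have "\<dots> = 1"
    by simp
  finally have "unit_root_char n m (int n * (u div int n)) = 1" .
  then show ?thesis
    using add[of "u mod int n" "int n * (u div int n)"] by simp
qed

lemma sum_unit_root_char:
  assumes "n > 0"
  shows "(\<Sum>k<n. unit_root_char n (int k) u) = (if int n dvd u then of_nat n else 0)"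
proof -
  define w where "w = cis (2 * pi * of_int u / of_nat n)"
  have powers: "unit_root_char n (int k) u = w ^ k" for k
    by (simp add: w_def unit_root_char_def DeMoivre mult_ac)
  have "w ^ n = 1"
    using assms by (simp add: w_def DeMoivre)
  moreover have "w = 1 \<longleftrightarrow> int n dvd u"
  proof
    assume "w = 1"
    then obtain k :: int where "2 * pi * of_int u / of_nat n = of_int k * (2 * pi)"
      unfolding w_def cis_eq_1_iff by blast
    then have "real_of_int u = real_of_int (k * int n)"
      using assms by (simp add: field_simps)
    then show "int n dvd u"
      by (simp only: of_int_eq_iff) simp
  next
    assume "int n dvd u"
    then obtain k where "u = int n * k" by blast
    then have "w = cis (2 * pi * of_int k)"
      unfolding w_def using assms by (intro arg_cong[where f = cis]) simp
    then show "w = 1"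
      by simp
  qed
  ultimately show ?thesis
    by (simp add: powers sum_gp_strict)
qed

lemma card_dvd_eq_sum_unit_root_char:
  assumes "n > 0" and "finite S"
  shows "of_nat (n * card {x \<in> S. int n dvd e x}) = (\<Sum>k<n. \<Sum>x\<in>S. unit_root_char n (int k) (e x))"
proof -
  have "(\<Sum>k<n. \<Sum>x\<in>S. unit_root_char n (int k) (e x)) = (\<Sum>x\<in>S. if int n dvd e x then of_nat n else 0)"
    using assms(1) by (subst sum.swap) (simp add: sum_unit_root_char)
  also have "\<dots> = of_nat (n * card {x \<in> S. int n dvd e x})"
    using assms(2) by (simp add: sum.If_cases Int_def)
  finally show ?thesis ..
qed

lemma balanced_sum_color:
  assumes "balanced a b n r lam" and "finite lam" and "n > 0"
  shows "(\<Sum>p\<in>lam. f (color a b (int n) p)) = of_nat r * (\<Sum>t<n. f (int t))"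
proof -
  have "(\<Sum>p\<in>lam. f (color a b (int n) p))
      = (\<Sum>t\<in>{0..<int n}. \<Sum>p\<in>{p \<in> lam. color a b (int n) p = t}. f (color a b (int n) p))"
    using assms(2,3) by (intro sum.group[symmetric]) (auto simp: color_def)
  also have "\<dots> = (\<Sum>t\<in>{0..<int n}. of_nat r * f t)"
    using assms(1) by (intro sum.cong refl) (simp add: balanced_def)
  also have "\<dots> = (\<Sum>t<n. of_nat r * f (int t))"
    by (rule sum.reindex_bij_witness[where i = int and j = nat]) auto
  also have "\<dots> = of_nat r * (\<Sum>t<n. f (int t))"
    by (simp add: sum_distrib_left)
  finally show ?thesis .
qed

lemma balanced_cell_sum_unit_root_char:
  assumes "balanced a b n r lam" and "finite lam" and "n > 0" and "\<not> int n dvd m"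
  shows "(\<Sum>(i, j)\<in>lam. unit_root_char n m (a * int i + b * int j)) = 0"
proof -
  have "(\<Sum>(i, j)\<in>lam. unit_root_char n m (a * int i + b * int j))
      = (\<Sum>p\<in>lam. unit_root_char n m (color a b (int n) p))"
    using assms(3) by (simp add: color_def unit_root_char_mod case_prod_unfold)
  also have "\<dots> = of_nat r * (\<Sum>t<n. unit_root_char n (int t) m)"
    using assms(1-3) by (simp add: balanced_sum_color unit_root_char_commute)
  also have "\<dots> = 0"
    using assms(3,4) by (simp add: sum_unit_root_char)
  finally show ?thesis .
qed

lemma card_invariant_arrows:
  assumes young: "young_diagram lam" and balanced: "balanced a b n r lam" and n: "n > 0"
  shows "n * (card {(i, j) \<in> lam. int n dvd arrow_weight a b (d_arrow lam i j)}
             + card {(i, j) \<in> lam. int n dvd arrow_weight a b (u_arrow lam i j)}) = 2 * card lam"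
    (is "n * ?count = _")
proof -
  have fin: "finite lam"
    by (rule young_diagram_finite[OF young])
  define Q where "Q k = (\<Sum>(i, j)\<in>lam. unit_root_char n k (a * int i + b * int j))" for k
  define S where "S k = (\<Sum>(i, j)\<in>lam. unit_root_char n k (arrow_weight a b (d_arrow lam i j)))
                      + (\<Sum>(i, j)\<in>lam. unit_root_char n k (arrow_weight a b (u_arrow lam i j)))" for k
  have S: "S k = Q (- k) + unit_root_char n k (a + b) * Q k
                 - (1 - unit_root_char n k a) * (1 - unit_root_char n k b) * Q k * Q (- k)" for k
    using int_character.sum_arrow_weights[OF int_character_unit_root_char young, of n k a b]
    unfolding S_def Q_def unit_root_char_uminus by simp
  have S_trivial: "S 0 = of_nat (2 * card lam)"
    by (simp add: S Q_def unit_root_char_zero)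
  have S_nontrivial: "S (int m) = 0" if "0 < m" and "m < n" for m
  proof -
    have not_dvd: "\<not> int n dvd int m"
      using that by (auto dest: zdvd_imp_le)
    then have "Q (int m) = 0"
      unfolding Q_def by (rule balanced_cell_sum_unit_root_char[OF balanced fin n])
    moreover have "Q (- int m) = 0"
      unfolding Q_def by (rule balanced_cell_sum_unit_root_char[OF balanced fin n])
        (use not_dvd in \<open>simp only: dvd_minus_iff not_False_eq_True\<close>)
    ultimately show ?thesis
      by (simp add: S)
  qed
  have count: "of_nat (n * card {(i, j) \<in> lam. int n dvd W i j})
      = (\<Sum>k<n. \<Sum>(i, j)\<in>lam. unit_root_char n (int k) (W i j))" for W
    using card_dvd_eq_sum_unit_root_char[OF n fin, of "case_prod W"] by (simp add: case_prod_unfold)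
  have "of_nat (n * ?count) = (\<Sum>k<Suc (n - 1). S (int k))"
    using n by (simp only: distrib_left of_nat_add count sum.distrib S_def Suc_diff_1)
  also have "\<dots> = S 0 + (\<Sum>k<n - 1. S (int (Suc k)))"
    by (simp only: sum.lessThan_Suc_shift of_nat_0)
  also have "(\<Sum>k<n - 1. S (int (Suc k))) = 0"
    by (intro sum.neutral ballI S_nontrivial) auto
  finally have "of_nat (n * ?count) = (of_nat (2 * card lam) :: complex)"
    by (simp only: S_trivial add_0_right)
  then show ?thesis
    by (simp only: of_nat_eq_iff)
qed

theorem corollary2p1:
  fixes r n :: nat and a b :: int and lam :: "(nat \<times> nat) set"
  assumes "r \<ge> 1" and "n \<ge> 1" and "gcd a b = 1"
    and "young_diagram lam" and "card lam = r * n"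
    and "balanced a b n r lam"
  shows "card {(i, j) \<in> lam. case_prod (invariant_arrow a b n) (d_arrow lam i j)}
       + card {(i, j) \<in> lam. case_prod (invariant_arrow a b n) (u_arrow lam i j)} = 2 * r"
proof -
  have "n * (card {(i, j) \<in> lam. case_prod (invariant_arrow a b n) (d_arrow lam i j)}
           + card {(i, j) \<in> lam. case_prod (invariant_arrow a b n) (u_arrow lam i j)}) = n * (2 * r)"
    using card_invariant_arrows[OF assms(4,6)] assms(2,5) by (simp add: invariant_arrow_iff_dvd mult_ac)
  then show ?thesis
    using assms(2) by simp
qed

end
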